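(* Let $v=v_1\cdots v_n$ be a word of distinct positive integers avoiding $31425,32415,31524,32514$, with positions of left-to-right maxima $a_1<\dots<a_h$ and of right-to-left maxima $b_1<\dots<b_g$ ($a_h=b_1$). Assume $g>1$, $a_h>h$, $h>2$ and $v_{a_{h-1}}>v_{b_2}$. Let $x=\max(\{j:1\le j<a_{h-1},\ v_j>v_{j+1}\}\cup\{0\})$. Then one of the following holds: (B-1) $x=0$; (B-2) $x\ne0$ and $a_h=a_{h-1}+1$; moreover, if $v_{b_2}>v_x$ then $v_x<v_j<v_{b_2}$ for all $a_h<j<b_2$; (B-3) $x\ne 0$, $a_h>a_{h-1}+1$, and $v_x<v_j<v_{a_{h-1}}$ for all $a_{h-1}<j<a_h$; moreover, if $v_{b_2}>v_x$ then $v_x<v_j<v_{b_2}$ for all $a_h<j<b_2$.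
   Context: A word of distinct positive integers avoids a pattern $P$ (a permutation of $[m]$) if no subsequence of length $m$ is order-isomorphic to $P$. A left-to-right (resp. right-to-left) maximum of $v$ is a letter $v_i$ greater than all letters to its left (resp. right). *)

theory Defs
  imports Main
begin

text \<open>Words are lists of natural numbers; positions are 1-based: letter i of v is v_i.\<close>

definition letter :: "nat list \<Rightarrow> nat \<Rightarrow> nat" where
  "letter v i = v ! (i - 1)"

definition contains_pattern :: "nat list \<Rightarrow> nat list \<Rightarrow> bool" where
  "contains_pattern P w \<longleftrightarrow>
     (\<exists>idx. length idx = length P \<and> sorted_wrt (<) idx \<and> (\<forall>i\<in>set idx. i < length w) \<and>
        (\<forall>k < length P. \<forall>l < length P. (w ! (idx ! k) < w ! (idx ! l)) \<longleftrightarrow> (P ! k < P ! l)))"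

definition avoids :: "nat list \<Rightarrow> nat list \<Rightarrow> bool" where
  "avoids w P \<longleftrightarrow> \<not> contains_pattern P w"

definition ltr_max_pos :: "nat list \<Rightarrow> nat list" where
  "ltr_max_pos v = sorted_list_of_set
     {i. 1 \<le> i \<and> i \<le> length v \<and> (\<forall>j. 1 \<le> j \<and> j < i \<longrightarrow> letter v j < letter v i)}"

definition rtl_max_pos :: "nat list \<Rightarrow> nat list" where
  "rtl_max_pos v = sorted_list_of_set
     {i. 1 \<le> i \<and> i \<le> length v \<and> (\<forall>j. i < j \<and> j \<le> length v \<longrightarrow> letter v j < letter v i)}"

end

theory Submission
  imports Defs
begin

text \<open>Let p < q be the positions of the last two left-to-right maxima and r that of the second
right-to-left maximum; q carries the largest letter. Every letter strictly between p and q is below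
v_p, and every letter strictly between q and r is below v_r < v_q. If x < p is a descent,
v_x > v_{x+1}, then v_x < v_p. A letter v_j < v_x in either gap would make the positions
x < x+1 < (left end of the gap) < j < (right end) realise 3, {1,2}, {4,5}, {1,2}, {4,5} in this
order, which is one of the four forbidden patterns.\<close>

lemma sorted_wrt_less_not_between_nth_Suc:
  fixes xs :: "'a::linorder list"
  assumes "sorted_wrt (<) xs" "Suc i < length xs" "xs ! i < m" "m < xs ! Suc i"
  shows "m \<notin> set xs"
proof
  assume "m \<in> set xs"
  then obtain k where k: "k < length xs" "xs ! k = m" by (auto simp: in_set_conv_nth)
  have "sorted xs" using assms(1) by (rule strict_sorted_imp_sorted)
  then have "k \<le> i \<Longrightarrow> m \<le> xs ! i" "Suc i \<le> k \<Longrightarrow> xs ! Suc i \<le> m"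
    using assms(2) k by (auto dest: sorted_nth_mono)
  then show False using assms(3,4) by (cases "k \<le> i") auto
qed

lemma sorted_wrt_less_le_last:
  fixes xs :: "'a::linorder list"
  assumes "sorted_wrt (<) xs" "m \<in> set xs"
  shows "m \<le> last xs"
proof -
  obtain k where k: "k < length xs" "xs ! k = m" using assms(2) by (auto simp: in_set_conv_nth)
  then have "last xs = xs ! (length xs - 1)" using last_conv_nth[of xs] by force
  then show ?thesis
    using sorted_nth_mono[OF strict_sorted_imp_sorted[OF assms(1)], of k "length xs - 1"] k by simp
qed

lemma set_ltr_max_pos:
  "set (ltr_max_pos v) =
     {i. 1 \<le> i \<and> i \<le> length v \<and> (\<forall>j. 1 \<le> j \<and> j < i \<longrightarrow> letter v j < letter v i)}"
  unfolding ltr_max_pos_def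
  by (rule set_sorted_list_of_set) (rule finite_subset[of _ "{..length v}"], auto)

lemma set_rtl_max_pos:
  "set (rtl_max_pos v) =
     {i. 1 \<le> i \<and> i \<le> length v \<and> (\<forall>j. i < j \<and> j \<le> length v \<longrightarrow> letter v j < letter v i)}"
  unfolding rtl_max_pos_def
  by (rule set_sorted_list_of_set) (rule finite_subset[of _ "{..length v}"], auto)

lemma sorted_ltr_max_pos: "sorted_wrt (<) (ltr_max_pos v)"
  unfolding ltr_max_pos_def by (rule strict_sorted_list_of_set)

lemma sorted_rtl_max_pos: "sorted_wrt (<) (rtl_max_pos v)"
  unfolding rtl_max_pos_def by (rule strict_sorted_list_of_set)

lemma letter_eq_iff:
  assumes "distinct v" "1 \<le> i" "i \<le> length v" "1 \<le> j" "j \<le> length v"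
  shows "letter v i = letter v j \<longleftrightarrow> i = j"
  using assms by (auto simp: letter_def nth_eq_iff_index_eq)

lemma ltr_max_pos_dominates:
  assumes "1 \<le> i" "i \<le> length v"
  shows "\<exists>m\<in>set (ltr_max_pos v). m \<le> i \<and> letter v i \<le> letter v m"
  using assms
proof (induction i rule: less_induct)
  case (less i)
  show ?case
  proof (cases "i \<in> set (ltr_max_pos v)")
    case False
    then obtain j where j: "1 \<le> j" "j < i" "letter v i \<le> letter v j"
      using less.prems by (auto simp: set_ltr_max_pos not_less)
    with less.IH[of j] obtain m where "m \<in> set (ltr_max_pos v)" "m \<le> j" "letter v j \<le> letter v m"
      using less.prems by auto
    with j show ?thesis by (meson dual_order.trans less_imp_le)
  qed auto
qed

lemma rtl_max_pos_dominates:
  assumes "1 \<le> i" "i \<le> length v"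
  shows "\<exists>m\<in>set (rtl_max_pos v). i \<le> m \<and> letter v i \<le> letter v m"
  using assms
proof (induction "length v - i" arbitrary: i rule: less_induct)
  case less
  show ?case
  proof (cases "i \<in> set (rtl_max_pos v)")
    case False
    then obtain j where j: "i < j" "j \<le> length v" "letter v i \<le> letter v j"
      using less.prems by (auto simp: set_rtl_max_pos not_less)
    moreover have "length v - j < length v - i" using j by linarith
    ultimately obtain m where "m \<in> set (rtl_max_pos v)" "j \<le> m" "letter v j \<le> letter v m"
      using less.hyps[of j] less.prems by auto
    with j show ?thesis by (meson dual_order.trans less_imp_le)
  qed auto
qed

lemma letter_less_between_ltr_max_pos:
  assumes "distinct v" "Suc k < length (ltr_max_pos v)"
    and "ltr_max_pos v ! k < j" "j < ltr_max_pos v ! Suc k"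
  shows "letter v j < letter v (ltr_max_pos v ! k)"
proof -
  let ?p = "ltr_max_pos v ! k" and ?q = "ltr_max_pos v ! Suc k"
  have pq: "?p \<in> set (ltr_max_pos v)" "?q \<in> set (ltr_max_pos v)"
    using assms(2) by auto
  then have j: "1 \<le> j" "j \<le> length v" "j \<noteq> ?p"
    using assms(3,4) by (auto simp: set_ltr_max_pos)
  obtain m where m: "m \<in> set (ltr_max_pos v)" "m \<le> j" "letter v j \<le> letter v m"
    using ltr_max_pos_dominates[OF j(1,2)] by blast
  have "m \<le> ?p"
    using sorted_wrt_less_not_between_nth_Suc[OF sorted_ltr_max_pos assms(2), of m] m assms(4)
    by linarith
  then have "letter v m \<le> letter v ?p"
    using m(1) pq(1) by (auto simp: set_ltr_max_pos order_le_less)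
  moreover have "letter v j \<noteq> letter v ?p"
    using letter_eq_iff[OF assms(1) j(1,2)] j(3) pq(1) by (auto simp: set_ltr_max_pos)
  ultimately show ?thesis using m(3) by linarith
qed

lemma letter_less_between_rtl_max_pos:
  assumes "distinct v" "Suc k < length (rtl_max_pos v)"
    and "rtl_max_pos v ! k < j" "j < rtl_max_pos v ! Suc k"
  shows "letter v j < letter v (rtl_max_pos v ! Suc k)"
proof -
  let ?p = "rtl_max_pos v ! k" and ?q = "rtl_max_pos v ! Suc k"
  have pq: "?p \<in> set (rtl_max_pos v)" "?q \<in> set (rtl_max_pos v)"
    using assms(2) by auto
  then have j: "1 \<le> j" "j \<le> length v" "j \<noteq> ?q"
    using assms(3,4) by (auto simp: set_rtl_max_pos)
  obtain m where m: "m \<in> set (rtl_max_pos v)" "j \<le> m" "letter v j \<le> letter v m"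
    using rtl_max_pos_dominates[OF j(1,2)] by blast
  have "?q \<le> m"
    using sorted_wrt_less_not_between_nth_Suc[OF sorted_rtl_max_pos assms(2), of m] m assms(3)
    by linarith
  then have "letter v m \<le> letter v ?q"
    using m(1) pq(2) by (auto simp: set_rtl_max_pos order_le_less)
  moreover have "letter v j \<noteq> letter v ?q"
    using letter_eq_iff[OF assms(1) j(1,2)] j(3) pq(2) by (auto simp: set_rtl_max_pos)
  ultimately show ?thesis using m(3) by linarith
qed

lemma letter_le_last_ltr_max_pos:
  assumes "1 \<le> i" "i \<le> length v"
  shows "letter v i \<le> letter v (last (ltr_max_pos v))"
proof -
  obtain m where m: "m \<in> set (ltr_max_pos v)" "letter v i \<le> letter v m"
    using ltr_max_pos_dominates[OF assms] by blast
  then have "last (ltr_max_pos v) \<in> set (ltr_max_pos v)" by (cases "ltr_max_pos v" rule: rev_cases) auto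
  moreover have "m \<le> last (ltr_max_pos v)"
    using sorted_wrt_less_le_last[OF sorted_ltr_max_pos m(1)] .
  ultimately have "letter v m \<le> letter v (last (ltr_max_pos v))"
    using m(1) by (auto simp: set_ltr_max_pos order_le_less)
  with m(2) show ?thesis by linarith
qed

lemma nth_0_rtl_max_pos:
  assumes "distinct v" "v \<noteq> []"
  shows "rtl_max_pos v ! 0 = last (ltr_max_pos v)"
proof -
  let ?q = "last (ltr_max_pos v)"
  have "1 \<in> set (ltr_max_pos v)" using assms(2) by (simp add: set_ltr_max_pos Suc_le_eq)
  then have "ltr_max_pos v \<noteq> []" by auto
  then have "?q \<in> set (ltr_max_pos v)" by simp
  then have q: "1 \<le> ?q" "?q \<le> length v" by (simp_all add: set_ltr_max_pos)
  have "letter v j < letter v ?q" if "?q < j" "j \<le> length v" for j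
  proof -
    have "letter v j \<le> letter v ?q" using letter_le_last_ltr_max_pos q that by simp
    moreover have "letter v j \<noteq> letter v ?q" using letter_eq_iff[OF assms(1), of j ?q] q that by simp
    ultimately show ?thesis by simp
  qed
  then have q_rtl: "?q \<in> set (rtl_max_pos v)" using q by (simp add: set_rtl_max_pos)
  then obtain r rs where B: "rtl_max_pos v = r # rs" by (cases "rtl_max_pos v") auto
  then have "r \<le> ?q" using sorted_rtl_max_pos[of v] q_rtl by (auto simp: order_le_less)
  moreover have "\<not> r < ?q"
  proof
    assume "r < ?q"
    moreover have r: "r \<in> set (rtl_max_pos v)" using B by simp
    ultimately have "letter v ?q < letter v r" using q by (simp add: set_rtl_max_pos)
    moreover have "letter v r \<le> letter v ?q"
      using r letter_le_last_ltr_max_pos by (simp add: set_rtl_max_pos)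
    ultimately show False by simp
  qed
  ultimately show ?thesis using B by simp
qed

lemma gaps_around_last_ltr_max_pos:
  assumes "distinct v" "2 \<le> length (ltr_max_pos v)" "2 \<le> length (rtl_max_pos v)"
  defines "p \<equiv> ltr_max_pos v ! (length (ltr_max_pos v) - 2)"
      and "q \<equiv> last (ltr_max_pos v)"
      and "r \<equiv> rtl_max_pos v ! 1"
  shows "p \<in> set (ltr_max_pos v)" "p < q" "q < r" "r \<le> length v"
    and "letter v p < letter v q" "letter v r < letter v q"
    and "p < j \<Longrightarrow> j < q \<Longrightarrow> letter v j < letter v p"
    and "q < j \<Longrightarrow> j < r \<Longrightarrow> letter v j < letter v r"
proof -
  let ?k = "length (ltr_max_pos v) - 2"
  have k: "Suc ?k < length (ltr_max_pos v)" using assms(2) by linarith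
  have "ltr_max_pos v \<noteq> []" using assms(2) by auto
  then have q_nth: "q = ltr_max_pos v ! Suc ?k"
    using assms(2) by (simp add: q_def last_conv_nth Suc_diff_Suc numeral_2_eq_2)
  show p: "p \<in> set (ltr_max_pos v)" using k by (simp add: p_def)
  have q: "q \<in> set (ltr_max_pos v)" using k by (simp add: q_nth)
  show "p < q" using sorted_wrt_nth_less[OF sorted_ltr_max_pos _ k] by (simp add: p_def q_nth)
  then show "letter v p < letter v q" using p q by (simp add: set_ltr_max_pos)
  show "p < j \<Longrightarrow> j < q \<Longrightarrow> letter v j < letter v p"
    using letter_less_between_ltr_max_pos[OF assms(1) k] by (simp add: p_def q_nth)
  have g: "Suc 0 < length (rtl_max_pos v)" using assms(3) by simp
  have "v \<noteq> []" using p by (auto simp: set_ltr_max_pos)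
  then have q_rtl: "q = rtl_max_pos v ! 0" by (simp add: q_def nth_0_rtl_max_pos[OF assms(1)])
  show "q < r" using sorted_wrt_nth_less[OF sorted_rtl_max_pos _ g, of 0] by (simp add: q_rtl r_def)
  moreover have "q \<in> set (rtl_max_pos v)" "r \<in> set (rtl_max_pos v)"
    using g by (auto simp: q_rtl r_def intro!: nth_mem)
  ultimately show "r \<le> length v" "letter v r < letter v q" by (auto simp: set_rtl_max_pos)
  show "q < j \<Longrightarrow> j < r \<Longrightarrow> letter v j < letter v r"
    using letter_less_between_rtl_max_pos[OF assms(1) g] by (simp add: q_rtl r_def)
qed

text \<open>The positions in ps are 1-based, as for letter; contains_pattern indexes from 0.\<close>

lemma contains_patternI:
  assumes "length ps = length P" "sorted_wrt (<) ps" "\<forall>p\<in>set ps. 1 \<le> p \<and> p \<le> length v"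
    and "\<forall>k<length P. \<forall>l<length P. letter v (ps ! k) < letter v (ps ! l) \<longleftrightarrow> P ! k < P ! l"
  shows "contains_pattern P v"
  unfolding contains_pattern_def
proof (intro exI conjI)
  let ?idx = "map (\<lambda>p. p - 1) ps"
  show "length ?idx = length P" using assms(1) by simp
  show "sorted_wrt (<) ?idx"
    using assms(2,3) by (auto simp: sorted_wrt_map elim!: sorted_wrt_mono_rel[rotated])
  show "\<forall>i\<in>set ?idx. i < length v" using assms(3) by auto
  show "\<forall>k<length P. \<forall>l<length P. v ! (?idx ! k) < v ! (?idx ! l) \<longleftrightarrow> P ! k < P ! l"
    using assms(1,4) by (simp add: letter_def)
qed

lemma descent_top_less_gap_letter:
  assumes "distinct v"
    and "avoids v [3,1,4,2,5]" "avoids v [3,2,4,1,5]" "avoids v [3,1,5,2,4]" "avoids v [3,2,5,1,4]"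
    and x: "1 \<le> x" "Suc x < c" "c < j" "j < d" "d \<le> length v"
    and descent: "letter v (Suc x) < letter v x"
    and big: "letter v x < letter v c" "letter v x < letter v d"
  shows "letter v x < letter v j"
proof (rule ccontr)
  let ?ps = "[x, Suc x, c, j, d]"
  have ps: "sorted_wrt (<) ?ps" "\<forall>p\<in>set ?ps. 1 \<le> p \<and> p \<le> length v"
    using x by auto
  have neq: "letter v j \<noteq> letter v x" "letter v j \<noteq> letter v (Suc x)" "letter v c \<noteq> letter v d"
    using x letter_eq_iff[OF \<open>distinct v\<close>] by auto
  assume "\<not> letter v x < letter v j"
  with neq have low: "letter v j < letter v x" by simp
  have pattern: "contains_pattern P v"
    if "length P = 5"
      and "\<forall>k<5. \<forall>l<5. letter v (?ps ! k) < letter v (?ps ! l) \<longleftrightarrow> P ! k < P ! l" for P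
    using contains_patternI[OF _ ps] that by simp
  consider "letter v (Suc x) < letter v j" "letter v c < letter v d"
    | "letter v j < letter v (Suc x)" "letter v c < letter v d"
    | "letter v (Suc x) < letter v j" "letter v d < letter v c"
    | "letter v j < letter v (Suc x)" "letter v d < letter v c"
    using neq by linarith
  then show False
  proof cases
    case 1
    then have "contains_pattern [3,1,4,2,5] v"
      using descent big low by (intro pattern) (auto simp: less_Suc_eq eval_nat_numeral)
    then show False using assms(2) by (simp add: avoids_def)
  next
    case 2
    then have "contains_pattern [3,2,4,1,5] v"
      using descent big low by (intro pattern) (auto simp: less_Suc_eq eval_nat_numeral)
    then show False using assms(3) by (simp add: avoids_def)
  next
    case 3
    then have "contains_pattern [3,1,5,2,4] v"
      using descent big low by (intro pattern) (auto simp: less_Suc_eq eval_nat_numeral)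
    then show False using assms(4) by (simp add: avoids_def)
  next
    case 4
    then have "contains_pattern [3,2,5,1,4] v"
      using descent big low by (intro pattern) (auto simp: less_Suc_eq eval_nat_numeral)
    then show False using assms(5) by (simp add: avoids_def)
  qed
qed

lemma descent_top_below_gaps:
  assumes "distinct v"
    and "avoids v [3,1,4,2,5]" "avoids v [3,2,4,1,5]" "avoids v [3,1,5,2,4]" "avoids v [3,2,5,1,4]"
    and "p \<in> set (ltr_max_pos v)" "p < q" "q < r" "r \<le> length v"
    and "letter v p < letter v q" "letter v r < letter v q"
    and x: "1 \<le> x" "x < p" "letter v (Suc x) < letter v x"
  shows "p < j \<Longrightarrow> j < q \<Longrightarrow> letter v x < letter v j"
    and "letter v x < letter v r \<Longrightarrow> q < j \<Longrightarrow> j < r \<Longrightarrow> letter v x < letter v j"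
proof -
  have "letter v x < letter v p" using assms(6) x(1,2) by (simp add: set_ltr_max_pos)
  then have "Suc x < p" using x by (cases "Suc x = p") auto
  note below = descent_top_less_gap_letter[OF assms(1-5) x(1) _ _ _ _ x(3)]
  show "p < j \<Longrightarrow> j < q \<Longrightarrow> letter v x < letter v j"
    using below[where c = p and d = q] \<open>Suc x < p\<close> \<open>letter v x < letter v p\<close> assms(7-10)
    by simp
  show "letter v x < letter v r \<Longrightarrow> q < j \<Longrightarrow> j < r \<Longrightarrow> letter v x < letter v j"
    using below[where c = q and d = r] \<open>Suc x < p\<close> \<open>letter v x < letter v p\<close> assms(7-10)
    by simp
qed

theorem lemma3p10:
  fixes v :: "nat list"
  defines "a \<equiv> (\<lambda>k. ltr_max_pos v ! (k - 1))"
      and "h \<equiv> length (ltr_max_pos v)"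
      and "b \<equiv> (\<lambda>k. rtl_max_pos v ! (k - 1))"
      and "g \<equiv> length (rtl_max_pos v)"
  assumes dist: "distinct v"
      and pos: "\<forall>c\<in>set v. 0 < c"
      and av1: "avoids v [3,1,4,2,5]"
      and av2: "avoids v [3,2,4,1,5]"
      and av3: "avoids v [3,1,5,2,4]"
      and av4: "avoids v [3,2,5,1,4]"
      and hg: "g > 1"
      and hah: "a h > h"
      and hh: "h > 2"
      and hv: "letter v (a (h - 1)) > letter v (b 2)"
  shows "let x = Max ({j. 1 \<le> j \<and> j < a (h - 1) \<and> letter v j > letter v (j + 1)} \<union> {0}) in
           x = 0
         \<or> (x \<noteq> 0 \<and> a h = a (h - 1) + 1 \<and>
             (letter v (b 2) > letter v x \<longrightarrow>
                (\<forall>j. a h < j \<and> j < b 2 \<longrightarrow> letter v x < letter v j \<and> letter v j < letter v (b 2))))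
         \<or> (x \<noteq> 0 \<and> a h > a (h - 1) + 1 \<and>
             (\<forall>j. a (h - 1) < j \<and> j < a h \<longrightarrow> letter v x < letter v j \<and> letter v j < letter v (a (h - 1))) \<and>
             (letter v (b 2) > letter v x \<longrightarrow>
                (\<forall>j. a h < j \<and> j < b 2 \<longrightarrow> letter v x < letter v j \<and> letter v j < letter v (b 2))))"
proof -
  have lengths: "2 \<le> length (ltr_max_pos v)" "2 \<le> length (rtl_max_pos v)"
    using hh hg by (simp_all add: h_def g_def)
  then have "ltr_max_pos v \<noteq> []" by auto
  then have "ltr_max_pos v ! (length (ltr_max_pos v) - 2) = a (h - 1)" "last (ltr_max_pos v) = a h"
      "rtl_max_pos v ! 1 = b 2"
    by (simp_all add: a_def b_def h_def last_conv_nth numeral_2_eq_2)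
  note gaps = gaps_around_last_ltr_max_pos[OF dist lengths, unfolded this]
  define x where "x = Max ({j. 1 \<le> j \<and> j < a (h - 1) \<and> letter v j > letter v (j + 1)} \<union> {0})"
  have "x \<in> {j. 1 \<le> j \<and> j < a (h - 1) \<and> letter v j > letter v (j + 1)} \<union> {0}"
    unfolding x_def by (rule Max_in) (auto intro: finite_subset[of _ "{..a (h - 1)}"])
  then consider "x = 0" | (descent) "1 \<le> x" "x < a (h - 1)" "letter v (Suc x) < letter v x"
    by auto
  then show ?thesis
  proof cases
    case descent
    note lower = descent_top_below_gaps[OF dist av1 av2 av3 av4 gaps(1-6) this]
    have "x \<noteq> 0" "a h = a (h - 1) + 1 \<or> a h > a (h - 1) + 1" using \<open>1 \<le> x\<close> gaps(2) by auto
    then show ?thesis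
      unfolding Let_def x_def[symmetric] using lower gaps(7,8) by blast
  qed (simp add: x_def)
qed

end
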